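(* Let $a,b,c,d,e,f$ be positive reals such that $\mathrm{Anth}(a,b)$, $\mathrm{Anth}(e,f)$, $\mathrm{Anth}(b,c)$, $\mathrm{Anth}(d,e)$, $\mathrm{Anth}(a,c)$, $\mathrm{Anth}(d,f)$ are all finite or eventually periodic, with $\mathrm{Anth}(a,b)=\mathrm{Anth}(e,f)$ and $\mathrm{Anth}(b,c)=\mathrm{Anth}(d,e)$. Then $\mathrm{Anth}(a,c)=\mathrm{Anth}(d,f)$.
   Context: For positive reals $a,b$, the anthyphairesis of $a$ to $b$ is the Euclidean subtraction algorithm: set $e_{-1}=a$, $e_0=b$, and for $i\ge 0$, as long as $e_i>0$, write $e_{i-1}=k_i e_i+e_{i+1}$ with $k_i$ a nonnegative integer and $0\le e_{i+1}<e_i$; the process stops if some remainder is $0$. $\mathrm{Anth}(a,b)=[k_0,k_1,\dots]$ is the sequence of quotients; it is finite if the process stops, and eventually periodic if it is infinite and there exist $N\ge0$, $p\ge1$ with $k_{i+p}=k_i$ for all $i\ge N$. *)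

theory Defs
  imports Complex_Main
begin

text \<open>Remainders of the anthyphairesis of a to b, shifted by one:
  anth_rem a b 0 = e_{-1} = a, anth_rem a b 1 = e_0 = b,
  anth_rem a b (n+2) = e_{n+1} = e_{n-1} - k_n e_n (once a remainder is 0, all later ones are 0).\<close>
fun anth_rem :: "real \<Rightarrow> real \<Rightarrow> nat \<Rightarrow> real" where
  "anth_rem a b 0 = a"
| "anth_rem a b (Suc 0) = b"
| "anth_rem a b (Suc (Suc n)) =
     (if anth_rem a b (Suc n) > 0
      then anth_rem a b n - of_int \<lfloor>anth_rem a b n / anth_rem a b (Suc n)\<rfloor> * anth_rem a b (Suc n)
      else 0)"

definition anth :: "real \<Rightarrow> real \<Rightarrow> nat \<Rightarrow> nat option" where
  "anth a b i = (if anth_rem a b (Suc i) > 0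
                 then Some (nat \<lfloor>anth_rem a b i / anth_rem a b (Suc i)\<rfloor>)
                 else None)"

definition anth_finite :: "real \<Rightarrow> real \<Rightarrow> bool" where
  "anth_finite a b \<longleftrightarrow> (\<exists>N. \<forall>i\<ge>N. anth a b i = None)"

definition anth_eventually_periodic :: "real \<Rightarrow> real \<Rightarrow> bool" where
  "anth_eventually_periodic a b \<longleftrightarrow>
     (\<forall>i. anth a b i \<noteq> None) \<and>
     (\<exists>N p. p \<ge> 1 \<and> (\<forall>i\<ge>N. anth a b (i + p) = anth a b i))"

end

theory Submission
  imports Defs
begin

text \<open>If Anth(a,b) = Anth(e,f), the two Euclidean algorithms perform the same subtractions, so
  the cross determinant of consecutive remainders, e(n) e'(n+1) - e(n+1) e'(n), only changes
  sign from one step to the next (or becomes 0 when both algorithms stop). Since the remainders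
  halve every two steps it also tends to 0, so it vanishes already at the start: a f = b e.
  Applying this twice gives a/c = (a/b)(b/c) = (e/f)(d/e) = d/f, and Anth is invariant under
  scaling both arguments.\<close>

lemma anth_rem_Suc_Suc_eq_frac:
  assumes "anth_rem a b (Suc n) > 0"
  shows "anth_rem a b (Suc (Suc n)) =
           anth_rem a b (Suc n) * frac (anth_rem a b n / anth_rem a b (Suc n))"
  using assms by (simp add: frac_def algebra_simps)

lemma anth_rem_Suc_Suc_nonneg: "anth_rem a b (Suc (Suc n)) \<ge> 0"
proof (cases "anth_rem a b (Suc n) > 0")
  case True
  then show ?thesis
    by (simp only: anth_rem_Suc_Suc_eq_frac) simp
qed simp

lemma anth_rem_nonneg:
  assumes "a > 0" "b > 0"
  shows "anth_rem a b n \<ge> 0"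
proof (cases n)
  case (Suc m)
  then show ?thesis
    using assms anth_rem_Suc_Suc_nonneg by (cases m) auto
qed (use assms in simp)

lemma anth_rem_Suc_Suc_le:
  assumes "a > 0" "b > 0"
  shows "anth_rem a b (Suc (Suc n)) \<le> anth_rem a b (Suc n)"
proof (cases "anth_rem a b (Suc n) > 0")
  case True
  then show ?thesis
    using less_imp_le[OF frac_lt_1]
    by (simp only: anth_rem_Suc_Suc_eq_frac) (simp add: mult_le_cancel_left1)
qed (use anth_rem_nonneg[OF assms] in simp)

lemma anth_rem_halves:
  assumes "a > 0" "b > 0"
  shows "anth_rem a b (Suc (Suc (Suc n))) \<le> anth_rem a b (Suc n) / 2"
proof (cases "anth_rem a b (Suc (Suc n)) > 0")
  case True
  define x where "x = anth_rem a b (Suc n)"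
  define y where "y = anth_rem a b (Suc (Suc n))"
  have "y > 0" "y \<le> x"
    using True anth_rem_Suc_Suc_le[OF assms] by (simp_all add: x_def y_def)
  have quot: "anth_rem a b (Suc (Suc (Suc n))) = x - of_int \<lfloor>x / y\<rfloor> * y"
    using True by (simp add: x_def y_def)
  have rem: "anth_rem a b (Suc (Suc (Suc n))) = y * frac (x / y)"
    using anth_rem_Suc_Suc_eq_frac[of a b "Suc n"] True by (simp only: x_def y_def)
  have "1 \<le> \<lfloor>x / y\<rfloor>"
    using \<open>y > 0\<close> \<open>y \<le> x\<close> by simp
  then have "anth_rem a b (Suc (Suc (Suc n))) \<le> x - y"
    unfolding quot using \<open>y > 0\<close> by (simp add: mult_le_cancel_right1)
  moreover have "anth_rem a b (Suc (Suc (Suc n))) < y"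
    unfolding rem using \<open>y > 0\<close> frac_lt_1 by simp
  ultimately show ?thesis
    by (simp add: x_def)
qed (use anth_rem_nonneg[OF assms] in simp)

lemma anth_rem_tendsto_zero:
  assumes "a > 0" "b > 0"
  shows "anth_rem a b \<longlonglongrightarrow> 0"
proof -
  let ?R = "\<lambda>n. anth_rem a b (Suc n)"
  have "decseq ?R"
    by (rule decseq_SucI) (rule anth_rem_Suc_Suc_le[OF assms])
  then obtain L where L: "?R \<longlonglongrightarrow> L"
    using anth_rem_nonneg[OF assms] decseq_convergent by blast
  have "L \<ge> 0"
    using L anth_rem_nonneg[OF assms] by (blast intro: LIMSEQ_le_const)
  have "(\<lambda>n. ?R (Suc (Suc n))) \<longlonglongrightarrow> L"
    using LIMSEQ_Suc[OF LIMSEQ_Suc[OF L]] .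
  moreover have "(\<lambda>n. ?R n / 2) \<longlonglongrightarrow> L / 2"
    using L by (intro tendsto_divide) auto
  ultimately have "L \<le> L / 2"
    using anth_rem_halves[OF assms] by (blast intro: LIMSEQ_le)
  with \<open>L \<ge> 0\<close> have "L = 0"
    by simp
  with LIMSEQ_imp_Suc[OF L] show ?thesis
    by simp
qed

lemma anth_rem_scale:
  assumes "t > 0"
  shows "anth_rem (t * a) (t * b) n = t * anth_rem a b n"
proof (induction a b n rule: anth_rem.induct)
  case (3 a b n)
  have "t * anth_rem a b n / (t * anth_rem a b (Suc n)) = anth_rem a b n / anth_rem a b (Suc n)"
    using assms by simp
  with 3 assms show ?case
    by (simp add: zero_less_mult_iff right_diff_distrib)
qed simp_all

lemma anth_scale:
  assumes "t > 0"
  shows "anth (t * a) (t * b) = anth a b"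
proof
  fix i
  have "t * anth_rem a b i / (t * anth_rem a b (Suc i)) = anth_rem a b i / anth_rem a b (Suc i)"
    using assms by simp
  with assms show "anth (t * a) (t * b) i = anth a b i"
    by (simp add: anth_def anth_rem_scale zero_less_mult_iff)
qed

definition anth_cross :: "real \<Rightarrow> real \<Rightarrow> real \<Rightarrow> real \<Rightarrow> nat \<Rightarrow> real" where
  "anth_cross a b e f n = anth_rem a b n * anth_rem e f (Suc n) - anth_rem a b (Suc n) * anth_rem e f n"

lemma anth_cross_tendsto_zero:
  assumes "a > 0" "b > 0" "e > 0" "f > 0"
  shows "anth_cross a b e f \<longlonglongrightarrow> 0"
proof -
  have R: "anth_rem a b \<longlonglongrightarrow> 0" and S: "anth_rem e f \<longlonglongrightarrow> 0"
    using assms anth_rem_tendsto_zero by simp_all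
  have "(\<lambda>n. anth_rem a b n * anth_rem e f (Suc n) - anth_rem a b (Suc n) * anth_rem e f n)
          \<longlonglongrightarrow> 0 * 0 - 0 * 0"
    using R S LIMSEQ_Suc[OF R] LIMSEQ_Suc[OF S] by (intro tendsto_diff tendsto_mult)
  then show ?thesis
    by (simp add: anth_cross_def[abs_def])
qed

context
  fixes a b e f :: real
  assumes pos: "a > 0" "b > 0" "e > 0" "f > 0"
    and eq: "anth a b = anth e f"
begin

lemma anth_eq_rem_pos_iff: "anth_rem a b (Suc i) > 0 \<longleftrightarrow> anth_rem e f (Suc i) > 0"
  using fun_cong[OF eq, of i] by (auto simp: anth_def split: if_splits)

lemma anth_eq_floor_eq:
  assumes "anth_rem a b (Suc i) > 0"
  shows "\<lfloor>anth_rem a b i / anth_rem a b (Suc i)\<rfloor> = \<lfloor>anth_rem e f i / anth_rem e f (Suc i)\<rfloor>"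
proof -
  have "anth_rem e f (Suc i) > 0"
    using assms anth_eq_rem_pos_iff by blast
  then have "nat \<lfloor>anth_rem a b i / anth_rem a b (Suc i)\<rfloor> = nat \<lfloor>anth_rem e f i / anth_rem e f (Suc i)\<rfloor>"
    using fun_cong[OF eq, of i] assms by (simp add: anth_def)
  moreover have "\<lfloor>anth_rem a b i / anth_rem a b (Suc i)\<rfloor> \<ge> 0" "\<lfloor>anth_rem e f i / anth_rem e f (Suc i)\<rfloor> \<ge> 0"
    using pos anth_rem_nonneg by simp_all
  ultimately show ?thesis
    by (metis nat_eq_iff2)
qed

lemma anth_cross_Suc:
  assumes "anth_rem a b (Suc n) > 0"
  shows "anth_cross a b e f (Suc n) = - anth_cross a b e f n"
proof -
  define k where "k = \<lfloor>anth_rem a b n / anth_rem a b (Suc n)\<rfloor>"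
  have "anth_rem e f (Suc n) > 0"
    using assms anth_eq_rem_pos_iff by blast
  then have rems: "anth_rem a b (Suc (Suc n)) = anth_rem a b n - of_int k * anth_rem a b (Suc n)"
    "anth_rem e f (Suc (Suc n)) = anth_rem e f n - of_int k * anth_rem e f (Suc n)"
    using assms anth_eq_floor_eq[OF assms] by (simp_all add: k_def)
  show ?thesis
    unfolding anth_cross_def rems by (simp add: algebra_simps)
qed

lemma anth_cross_stop:
  assumes "\<not> anth_rem a b (Suc n) > 0"
  shows "anth_cross a b e f n = 0"
proof -
  have "anth_rem a b (Suc n) = 0" "anth_rem e f (Suc n) = 0"
    using assms anth_eq_rem_pos_iff[of n] anth_rem_nonneg[OF pos(1,2), of "Suc n"]
      anth_rem_nonneg[OF pos(3,4), of "Suc n"]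
    by linarith+
  then show ?thesis
    by (simp add: anth_cross_def)
qed

lemma abs_anth_cross_eq:
  assumes "anth_cross a b e f 0 \<noteq> 0"
  shows "\<bar>anth_cross a b e f n\<bar> = \<bar>anth_cross a b e f 0\<bar>"
proof (induction n)
  case (Suc n)
  have "anth_rem a b (Suc n) > 0"
  proof (rule ccontr)
    assume "\<not> anth_rem a b (Suc n) > 0"
    then have "anth_cross a b e f n = 0"
      by (rule anth_cross_stop)
    with Suc.IH assms show False
      by simp
  qed
  with Suc.IH show ?case
    by (simp only: anth_cross_Suc abs_minus_cancel)
qed simp

lemma anth_eq_imp_cross_eq: "a * f = b * e"
proof -
  have "anth_cross a b e f 0 = 0"
  proof (rule ccontr)
    assume nz: "anth_cross a b e f 0 \<noteq> 0"
    have "(\<lambda>n. \<bar>anth_cross a b e f n\<bar>) = (\<lambda>n. \<bar>anth_cross a b e f 0\<bar>)"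
      by (intro ext abs_anth_cross_eq[OF nz])
    then have "(\<lambda>n. \<bar>anth_cross a b e f 0\<bar>) \<longlonglongrightarrow> 0"
      using tendsto_rabs[OF anth_cross_tendsto_zero[OF pos]] by simp
    with nz show False
      by (simp add: LIMSEQ_const_iff)
  qed
  then show ?thesis
    by (simp add: anth_cross_def)
qed

end

theorem proposition10p2p8:
  fixes a b c d e f :: real
  assumes pos: "a > 0" "b > 0" "c > 0" "d > 0" "e > 0" "f > 0"
    and fp: "anth_finite a b \<or> anth_eventually_periodic a b"
            "anth_finite e f \<or> anth_eventually_periodic e f"
            "anth_finite b c \<or> anth_eventually_periodic b c"
            "anth_finite d e \<or> anth_eventually_periodic d e"
            "anth_finite a c \<or> anth_eventually_periodic a c"
            "anth_finite d f \<or> anth_eventually_periodic d f"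
    and eq1: "anth a b = anth e f"
    and eq2: "anth b c = anth d e"
  shows "anth a c = anth d f"
proof -
  have "a * f = b * e" "b * e = c * d"
    using anth_eq_imp_cross_eq[OF pos(1,2,5,6) eq1] anth_eq_imp_cross_eq[OF pos(2,3,4,5) eq2] .
  define t where "t = f / c"
  have "t > 0" "d = t * a" "f = t * c"
    using pos \<open>a * f = b * e\<close> \<open>b * e = c * d\<close> by (simp_all add: t_def field_simps)
  then show ?thesis
    using anth_scale[of t a c] by simp
qed

end
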